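(* Let $k\ge 2$ be an integer, let $\lambda>0$, and let $Y_{k,\lambda}$ be a random variable having the Poisson distribution of order $k$ with parameter $\lambda$. Let $\nu$ be an integer with $0\le \nu\le k$. Then $P(Y_{k,\lambda}\le \nu)=\tfrac12$ if and only if $$\frac{e^{k\lambda}}{2}=\sum_{j=0}^{\nu}\binom{\nu}{j}\frac{\lambda^j}{j!}.$$
   Context: The Poisson distribution of order $k$ with parameter $\lambda>0$ (for an integer $k\ge1$) is the distribution on $\{0,1,2,\dots\}$ with probability generating function $E[x^{Y_{k,\lambda}}]=\exp\bigl(-k\lambda\bigr)\exp\bigl(\lambda\sum_{i=1}^{k}x^i\bigr)$, i.e. the compound Poisson distribution with pgf $\exp\bigl(-\sum_i a_i\bigr)\exp\bigl(\sum_i a_i x^i\bigr)$ where $a_1=\dots=a_k=\lambda$ and all other $a_i=0$. Equivalently, its probability mass function $p_n=P(Y_{k,\lambda}=n)$ satisfies $p_0=e^{-k\lambda}$ and $p_n=e^{-k\lambda}\sum_{j=1}^{n}\binom{n-1}{j-1}\frac{\lambda^j}{j!}$ for $n=1,\dots,k$. The median is defined as the smallest integer $\nu$ with $P(Y_{k,\lambda}\le\nu)\ge\tfrac12$; the displayed equation is the equation determining the value of $\lambda$ at which $P(Y_{k,\lambda}\le\nu)=\tfrac12$. *)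

theory Defs
  imports "HOL-Probability.Probability"
begin

text \<open>Probability mass function of the Poisson distribution of order k with parameter lam,
  i.e. the coefficient of x^n in exp(-k lam) * exp(lam * (x + ... + x^k)):
  p_n = exp(-k lam) * sum over (m_1,...,m_k) with m_1 + 2 m_2 + ... + k m_k = n
        of prod_i lam^(m_i) / m_i!.\<close>
definition poisson_order_pmf :: "nat \<Rightarrow> real \<Rightarrow> nat \<Rightarrow> real" where
  "poisson_order_pmf k lam n =
     exp (- (real k * lam)) *
     (\<Sum>m\<in>{m \<in> {1..k} \<rightarrow>\<^sub>E {..n}. (\<Sum>i\<in>{1..k}. i * m i) = n}.
        \<Prod>i\<in>{1..k}. lam ^ m i / fact (m i))"

end

theory Submission imports Defs begin

text \<open>Let \<open>c n\<close> be the coefficient of \<open>x\<^sup>n\<close> in \<open>exp (lam (x + \<dots> + x\<^sup>k))\<close>, so that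
  \<open>P(Y = n) = exp (-k lam) c n\<close>. Differentiating the generating function gives
  \<open>n c n = lam (\<Sum>i = 1..min n k. i c (n - i))\<close>. For \<open>n \<le> k\<close> the minimum is \<open>n\<close>, and the
  recurrence says that the partial sums \<open>S n = c 0 + \<dots> + c n\<close> satisfy \<open>S 0 = 1\<close> and
  \<open>n (S n - S (n - 1)) = lam (S 0 + \<dots> + S (n - 1))\<close>. The sums \<open>\<Sum>j\<le>n. (n choose j) lam\<^sup>j / j!\<close>
  satisfy the same recursion, so they agree with \<open>S n\<close> as long as \<open>n \<le> k\<close>.\<close>

definition bounded_partitions :: "nat \<Rightarrow> nat \<Rightarrow> (nat \<Rightarrow> nat) set" where
  "bounded_partitions k n = {m \<in> {1..k} \<rightarrow>\<^sub>E {..n}. (\<Sum>i\<in>{1..k}. i * m i) = n}"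

definition partition_weight :: "nat \<Rightarrow> real \<Rightarrow> (nat \<Rightarrow> nat) \<Rightarrow> real" where
  "partition_weight k lam m = (\<Prod>i\<in>{1..k}. lam ^ m i / fact (m i))"

definition poisson_order_coeff :: "nat \<Rightarrow> real \<Rightarrow> nat \<Rightarrow> real" where
  "poisson_order_coeff k lam n = (\<Sum>m\<in>bounded_partitions k n. partition_weight k lam m)"

lemma poisson_order_pmf_eq:
  "poisson_order_pmf k lam n = exp (- (real k * lam)) * poisson_order_coeff k lam n"
  by (simp add: poisson_order_pmf_def poisson_order_coeff_def bounded_partitions_def
      partition_weight_def)

lemma finite_bounded_partitions: "finite (bounded_partitions k n)"
  by (rule finite_subset[of _ "{1..k} \<rightarrow>\<^sub>E {..n}"])
     (auto simp: bounded_partitions_def intro: finite_PiE)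

lemma bounded_partitions_iff:
  "m \<in> bounded_partitions k n \<longleftrightarrow> m \<in> extensional {1..k} \<and> (\<Sum>i\<in>{1..k}. i * m i) = n"
proof
  assume m: "m \<in> extensional {1..k} \<and> (\<Sum>i\<in>{1..k}. i * m i) = n"
  have "m j \<le> n" if "j \<in> {1..k}" for j
  proof -
    have "m j \<le> j * m j" using that by auto
    also have "\<dots> \<le> (\<Sum>i\<in>{1..k}. i * m i)" by (rule member_le_sum) (use that in auto)
    finally show ?thesis using m by simp
  qed
  with m show "m \<in> bounded_partitions k n" by (auto simp: bounded_partitions_def PiE_iff)
qed (auto simp: bounded_partitions_def PiE_iff)

lemma bounded_partitions_0: "bounded_partitions k 0 = {\<lambda>_\<in>{1..k}. 0}"
proof -
  have "m = (\<lambda>_\<in>{1..k}. 0)" if "m \<in> bounded_partitions k 0" for m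
    using that by (auto simp: bounded_partitions_iff extensional_def)
  then show ?thesis by (auto simp: bounded_partitions_iff)
qed

lemma poisson_order_coeff_0 [simp]: "poisson_order_coeff k lam 0 = 1"
  by (simp add: poisson_order_coeff_def bounded_partitions_0 partition_weight_def)

lemma bounded_partition_eq_0:
  assumes "m \<in> bounded_partitions k n" "i \<in> {1..k}" "n < i"
  shows "m i = 0"
proof (rule ccontr)
  assume "m i \<noteq> 0"
  then have "i \<le> i * m i" by simp
  also have "\<dots> \<le> (\<Sum>j\<in>{1..k}. j * m j)" by (rule member_le_sum) (use assms in auto)
  also have "\<dots> = n" using assms by (simp add: bounded_partitions_iff)
  finally show False using assms by simp
qed

lemma sum_fun_upd_add:
  fixes f :: "'a \<Rightarrow> 'b \<Rightarrow> 'c::comm_monoid_add"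
  assumes "finite A" "i \<in> A"
  shows "(\<Sum>j\<in>A. f j ((m(i := v)) j)) + f i (m i) = (\<Sum>j\<in>A. f j (m j)) + f i v"
proof -
  have "(\<Sum>j\<in>A - {i}. f j ((m(i := v)) j)) = (\<Sum>j\<in>A - {i}. f j (m j))"
    by (rule sum.cong) auto
  with assms show ?thesis by (simp add: sum.remove ac_simps)
qed

lemma fun_upd_in_bounded_partitions:
  assumes "m \<in> bounded_partitions k n" "i \<in> {1..k}" "n + i * v = n' + i * m i"
  shows "m(i := v) \<in> bounded_partitions k n'"
proof -
  have "(\<Sum>j\<in>{1..k}. j * (m(i := v)) j) + i * m i = n + i * v"
    using sum_fun_upd_add[of "{1..k}" i "\<lambda>j x. j * x" m v] assms
    by (simp add: bounded_partitions_iff)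
  then have "(\<Sum>j\<in>{1..k}. j * (m(i := v)) j) = n'" using assms(3) by linarith
  with assms show ?thesis by (auto simp: bounded_partitions_iff extensional_def)
qed

text \<open>The combinatorial form of differentiating \<open>exp (lam x\<^sup>i)\<close>: lowering the multiplicity
  \<open>m i\<close> by one maps the partitions of \<open>n\<close> with \<open>m i > 0\<close> bijectively onto those of \<open>n - i\<close>.\<close>

lemma sum_mult_partition_weight:
  assumes i: "i \<in> {1..k}" "i \<le> n"
  shows "(\<Sum>m\<in>bounded_partitions k n. real (m i) * partition_weight k lam m)
           = lam * poisson_order_coeff k lam (n - i)"
proof -
  let ?S = "{m \<in> bounded_partitions k n. m i \<noteq> 0}"
  let ?g = "\<lambda>t. lam ^ t / fact t"
  have weight_split: "partition_weight k lam m = ?g (m i) * (\<Prod>j\<in>{1..k} - {i}. ?g (m j))" for m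
    using i by (simp add: partition_weight_def prod.remove)
  have "(\<Sum>m\<in>bounded_partitions k n. real (m i) * partition_weight k lam m)
          = (\<Sum>m\<in>?S. real (m i) * partition_weight k lam m)"
    by (rule sum.mono_neutral_right[OF finite_bounded_partitions]) auto
  also have "\<dots> = (\<Sum>m\<in>bounded_partitions k (n - i). lam * partition_weight k lam m)"
  proof (rule sum.reindex_bij_witness
      [where i = "\<lambda>m. m(i := m i + 1)" and j = "\<lambda>m. m(i := m i - 1)"])
    fix m assume m: "m \<in> ?S"
    then show "m(i := m i - 1) \<in> bounded_partitions k (n - i)"
      using i by (intro fun_upd_in_bounded_partitions) (auto simp: algebra_simps)
    from m obtain b where b: "m i = Suc b" by (cases "m i") auto
    then have lowered: "m(i := m i - 1) = m(i := b)" by simp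
    have factor: "real (m i) * ?g (m i) = lam * ?g b"
      unfolding b by (simp add: field_simps del: of_nat_Suc)
    have rest: "(\<Prod>j\<in>{1..k} - {i}. ?g ((m(i := b)) j)) = (\<Prod>j\<in>{1..k} - {i}. ?g (m j))"
      by (rule prod.cong) auto
    show "lam * partition_weight k lam (m(i := m i - 1)) = real (m i) * partition_weight k lam m"
      unfolding lowered weight_split[of m] weight_split[of "m(i := b)"] fun_upd_same
      by (simp only: mult.assoc[symmetric] factor rest)
  next
    fix m assume "m \<in> bounded_partitions k (n - i)"
    then show "m(i := m i + 1) \<in> ?S"
      using i by (auto intro!: fun_upd_in_bounded_partitions simp: algebra_simps)
  qed auto
  also have "\<dots> = lam * poisson_order_coeff k lam (n - i)"
    by (simp add: poisson_order_coeff_def sum_distrib_left)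
  finally show ?thesis .
qed

lemma poisson_order_coeff_recurrence:
  "real n * poisson_order_coeff k lam n
     = lam * (\<Sum>i\<in>{1..min n k}. real i * poisson_order_coeff k lam (n - i))"
proof -
  let ?c = "poisson_order_coeff k lam"
  have "real n * ?c n = (\<Sum>m\<in>bounded_partitions k n.
          real (\<Sum>i\<in>{1..k}. i * m i) * partition_weight k lam m)"
    unfolding poisson_order_coeff_def sum_distrib_left
    by (rule sum.cong) (auto simp: bounded_partitions_iff)
  also have "\<dots> = (\<Sum>m\<in>bounded_partitions k n. \<Sum>i\<in>{1..k}.
                   real i * (real (m i) * partition_weight k lam m))"
    by (simp add: sum_distrib_right mult.assoc)
  also have "\<dots> = (\<Sum>i\<in>{1..k}. real i *
                   (\<Sum>m\<in>bounded_partitions k n. real (m i) * partition_weight k lam m))"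
    by (subst sum.swap) (simp add: sum_distrib_left)
  also have "\<dots> = (\<Sum>i\<in>{1..k}. if i \<le> n then real i * (lam * ?c (n - i)) else 0)"
    by (rule sum.cong)
       (auto simp: sum_mult_partition_weight bounded_partition_eq_0 intro!: sum.neutral)
  also have "\<dots> = (\<Sum>i\<in>{1..min n k}. real i * (lam * ?c (n - i)))"
    by (subst sum.inter_filter[symmetric]) (auto intro!: sum.cong)
  finally show ?thesis by (simp add: sum_distrib_left mult_ac)
qed

lemma sum_mult_diff_eq_sum_partial_sums:
  fixes c :: "nat \<Rightarrow> 'a::comm_ring_1"
  shows "(\<Sum>i\<in>{1..n}. of_nat i * c (n - i)) = (\<Sum>r<n. \<Sum>l\<le>r. c l)"
proof (induction n)
  case (Suc n)
  have "(\<Sum>i\<in>{1..Suc n}. of_nat i * c (Suc n - i)) = (\<Sum>i\<in>{0..n}. of_nat (Suc i) * c (n - i))"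
    unfolding One_nat_def sum.shift_bounds_cl_Suc_ivl by simp
  also have "\<dots> = (\<Sum>i\<in>{0..n}. c (n - i)) + (\<Sum>i\<in>{0..n}. of_nat i * c (n - i))"
    by (simp add: sum.distrib algebra_simps)
  also have "(\<Sum>i\<in>{0..n}. c (n - i)) = (\<Sum>l\<le>n. c l)"
    using sum.atLeastAtMost_rev[of c 0 n] by (simp add: atLeast0AtMost)
  also have "(\<Sum>i\<in>{0..n}. of_nat i * c (n - i)) = (\<Sum>i\<in>{1..n}. of_nat i * c (n - i))"
    by (simp add: sum.atLeast_Suc_atMost atLeast0AtMost[symmetric])
  finally show ?case using Suc by simp
qed simp

definition laguerre_neg :: "real \<Rightarrow> nat \<Rightarrow> real" where
  "laguerre_neg lam n = (\<Sum>j\<le>n. real (n choose j) * lam ^ j / fact j)"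

lemma sum_laguerre_neg:
  "(\<Sum>r\<le>p. laguerre_neg lam r) = (\<Sum>j\<le>p. real (Suc p choose Suc j) * lam ^ j / fact j)"
proof -
  have "(\<Sum>r\<le>p. laguerre_neg lam r) = (\<Sum>r\<le>p. \<Sum>j\<le>p. real (r choose j) * lam ^ j / fact j)"
    unfolding laguerre_neg_def by (intro sum.cong refl sum.mono_neutral_left) auto
  also have "\<dots> = (\<Sum>j\<le>p. (\<Sum>r\<le>p. real (r choose j)) * lam ^ j / fact j)"
    by (subst sum.swap) (simp add: sum_distrib_right sum_divide_distrib)
  also have "\<dots> = (\<Sum>j\<le>p. real (Suc p choose Suc j) * lam ^ j / fact j)"
    by (simp only: of_nat_sum[symmetric] sum_choose_upper)
  finally show ?thesis .
qed

lemma laguerre_neg_Suc: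
  "laguerre_neg lam (Suc p) = laguerre_neg lam p + lam / real (Suc p) * (\<Sum>r\<le>p. laguerre_neg lam r)"
proof -
  have Suc_p: "laguerre_neg lam (Suc p)
      = 1 + (\<Sum>j\<le>p. real (Suc p choose Suc j) * lam ^ Suc j / fact (Suc j))"
    unfolding laguerre_neg_def by (subst sum.atMost_Suc_shift) simp
  have "laguerre_neg lam p = (\<Sum>j\<le>Suc p. real (p choose j) * lam ^ j / fact j)"
    unfolding laguerre_neg_def by (intro sum.mono_neutral_left) auto
  then have p: "laguerre_neg lam p = 1 + (\<Sum>j\<le>p. real (p choose Suc j) * lam ^ Suc j / fact (Suc j))"
    by (subst (asm) sum.atMost_Suc_shift) simp
  have shifted_term: "real (p choose j) * lam ^ Suc j / fact (Suc j)
      = lam / real (Suc p) * (real (Suc p choose Suc j) * lam ^ j / fact j)" for j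
  proof -
    have "real (Suc p) * real (p choose j) = real (Suc p choose Suc j) * real (Suc j)"
      by (metis Suc_times_binomial_eq of_nat_mult)
    then show ?thesis by (simp add: field_simps del: of_nat_Suc)
  qed
  have "laguerre_neg lam (Suc p) - laguerre_neg lam p
      = (\<Sum>j\<le>p. real (p choose j) * lam ^ Suc j / fact (Suc j))"
    unfolding Suc_p p by (simp add: sum_subtractf[symmetric] algebra_simps add_divide_distrib)
  also have "\<dots> = lam / real (Suc p) * (\<Sum>r\<le>p. laguerre_neg lam r)"
    unfolding sum_laguerre_neg sum_distrib_left shifted_term ..
  finally show ?thesis by simp
qed

lemma sum_poisson_order_coeff_eq_laguerre_neg:
  assumes "n \<le> k"
  shows "(\<Sum>l\<le>n. poisson_order_coeff k lam l) = laguerre_neg lam n"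
  using assms
proof (induction n rule: less_induct)
  case (less n)
  show ?case
  proof (cases n)
    case 0
    then show ?thesis by (simp add: laguerre_neg_def)
  next
    case (Suc p)
    let ?c = "poisson_order_coeff k lam"
    have IH: "(\<Sum>l\<le>r. ?c l) = laguerre_neg lam r" if "r \<le> p" for r
      using less that Suc by auto
    have "real n * ?c n = lam * (\<Sum>r<n. \<Sum>l\<le>r. ?c l)"
      using poisson_order_coeff_recurrence[of n k lam] min_absorb1[OF less.prems]
        sum_mult_diff_eq_sum_partial_sums[where c = ?c] by simp
    also have "(\<Sum>r<n. \<Sum>l\<le>r. ?c l) = (\<Sum>r\<le>p. laguerre_neg lam r)"
      unfolding Suc lessThan_Suc_atMost using IH by simp
    finally have "?c n = lam / real (Suc p) * (\<Sum>r\<le>p. laguerre_neg lam r)"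
      using Suc by (simp add: field_simps del: of_nat_Suc)
    then show ?thesis using IH[of p] Suc laguerre_neg_Suc by simp
  qed
qed

lemma (in finite_measure) measure_nat_le_eq_sum:
  fixes Y :: "'a \<Rightarrow> nat"
  assumes "Y \<in> measurable M (count_space UNIV)"
  shows "measure M {\<omega> \<in> space M. Y \<omega> \<le> \<nu>} = (\<Sum>n\<le>\<nu>. measure M {\<omega> \<in> space M. Y \<omega> = n})"
proof -
  have "{\<omega> \<in> space M. Y \<omega> \<le> \<nu>} = (\<Union>n\<le>\<nu>. {\<omega> \<in> space M. Y \<omega> = n})" by auto
  moreover have "{\<omega> \<in> space M. Y \<omega> = n} \<in> sets M" for n
    using assms by measurable
  ultimately show ?thesis
    by (auto intro!: finite_measure_finite_Union simp: disjoint_family_on_def)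
qed

theorem mainTheorem1:
  fixes M :: "'a measure" and Y :: "'a \<Rightarrow> nat" and k \<nu> :: nat and lam :: real
  assumes "prob_space M"
    and "Y \<in> measurable M (count_space UNIV)"
    and "\<And>n. measure M {\<omega> \<in> space M. Y \<omega> = n} = poisson_order_pmf k lam n"
    and "k \<ge> 2" and "lam > 0" and "\<nu> \<le> k"
  shows "measure M {\<omega> \<in> space M. Y \<omega> \<le> \<nu>} = 1/2 \<longleftrightarrow>
         exp (real k * lam) / 2 = (\<Sum>j=0..\<nu>. real (\<nu> choose j) * lam ^ j / fact j)"
proof -
  interpret prob_space M by fact
  have "measure M {\<omega> \<in> space M. Y \<omega> \<le> \<nu>} = (\<Sum>n\<le>\<nu>. poisson_order_pmf k lam n)"
    using measure_nat_le_eq_sum[OF assms(2)] assms(3) by simp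
  also have "\<dots> = exp (- (real k * lam)) * laguerre_neg lam \<nu>"
    using sum_poisson_order_coeff_eq_laguerre_neg[OF assms(6)]
    by (simp add: poisson_order_pmf_eq sum_distrib_left[symmetric])
  finally have cdf:
    "measure M {\<omega> \<in> space M. Y \<omega> \<le> \<nu>} = exp (- (real k * lam)) * laguerre_neg lam \<nu>" .
  have "(\<Sum>j=0..\<nu>. real (\<nu> choose j) * lam ^ j / fact j) = laguerre_neg lam \<nu>"
    by (simp add: laguerre_neg_def atLeast0AtMost)
  then show ?thesis unfolding cdf by (auto simp: exp_minus field_simps)
qed

end
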